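(* Consider the Gaussian broadcast model on $P=\mathcal{HS}_3$ with $\alpha_3=1/3$. Let $M,t$ be integers with $M\ge2^5$ and $t\ge2^{24}M^6$. Then for all integers $i,j,i',j'$ with $\max\{|i-i'|,|j-j'|\}\le2M$, $$\log t\ge\operatorname{Var}\big(X_{(i,j,t-i-j)}\big)\ge\operatorname{Cov}\big(X_{(i,j,t-i-j)},X_{(i',j',t-i'-j')}\big)\ge\frac{\log t}{400}.$$
   Context: Infinite model: $\mathcal{HS}_{d+1}=\{(x_1,\dots,x_{d+1})\in\mathbb Z^{d+1}:x_1+\dots+x_{d+1}\ge0\}$ with $u\le v$ iff $v-u\in\mathbb Z_{\ge0}^{d+1}$; layer $L_t$ = points with coordinate sum $t$; each point $v$ of rank $\ge1$ covers exactly the $d+1$ points $v-e_i$ (the set $\mathfrak p(v)$). Gaussian broadcast model: $X_0\sim\mathcal N(0,1)$; independently, i.i.d. $W_{u\to v}\sim\mathcal N(0,1)$ for covering pairs $u\lessdot v$; $X_v=X_0$ for every $v\in L_0$; and $X_v=\alpha_{d+1}\sum_{u\in\mathfrak p(v)}(X_u+W_{u\to v})$ for $v$ of rank $\ge1$. Here $d=2$; $\log$ is the natural logarithm. *)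

theory Defs
  imports "HOL-Probability.Probability"
begin

type_synonym point = "int \<times> int \<times> int"

definition rank :: "point \<Rightarrow> int" where
  "rank v = (case v of (a, b, c) \<Rightarrow> a + b + c)"

definition HS3 :: "point set" where
  "HS3 = {v. rank v \<ge> 0}"

definition pred_pt :: "nat \<Rightarrow> point \<Rightarrow> point" where
  "pred_pt i v = (case v of (a, b, c) \<Rightarrow>
     if i = 0 then (a - 1, b, c) else if i = 1 then (a, b - 1, c) else (a, b, c - 1))"

definition cover_edges :: "(point \<times> point) set" where
  "cover_edges = {(u, v). v \<in> HS3 \<and> rank v \<ge> 1 \<and> (\<exists>i<3. u = pred_pt i v)}"

text \<open>Recursive definition of the broadcast values: given the root value x0 and
  edge noises w, bx x0 w n v is the value at a point v of rank n.\<close>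
fun bx :: "real \<Rightarrow> real \<Rightarrow> (point \<times> point \<Rightarrow> real) \<Rightarrow> nat \<Rightarrow> point \<Rightarrow> real" where
  "bx \<alpha> x0 w 0 v = x0"
| "bx \<alpha> x0 w (Suc n) v =
     \<alpha> * (\<Sum>i<3. bx \<alpha> x0 w n (pred_pt i v) + w (pred_pt i v, v))"

definition broadcastX ::
  "real \<Rightarrow> ('w \<Rightarrow> real) \<Rightarrow> (point \<times> point \<Rightarrow> 'w \<Rightarrow> real) \<Rightarrow> point \<Rightarrow> 'w \<Rightarrow> real" where
  "broadcastX \<alpha> X0 W v = (\<lambda>\<omega>. bx \<alpha> (X0 \<omega>) (\<lambda>e. W e \<omega>) (nat (rank v)) v)"

definition covariance :: "'w measure \<Rightarrow> ('w \<Rightarrow> real) \<Rightarrow> ('w \<Rightarrow> real) \<Rightarrow> real" where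
  "covariance M X Y =
     (\<integral>\<omega>. (X \<omega> - (\<integral>x. X x \<partial>M)) * (Y \<omega> - (\<integral>x. Y x \<partial>M)) \<partial>M)"

definition variance_of :: "'w measure \<Rightarrow> ('w \<Rightarrow> real) \<Rightarrow> real" where
  "variance_of M X = (\<integral>\<omega>. (X \<omega> - (\<integral>x. X x \<partial>M))\<^sup>2 \<partial>M)"

definition noise_family ::
  "('w \<Rightarrow> real) \<Rightarrow> (point \<times> point \<Rightarrow> 'w \<Rightarrow> real) \<Rightarrow> (point \<times> point) option \<Rightarrow> 'w \<Rightarrow> real" where
  "noise_family X0 W k = (case k of None \<Rightarrow> X0 | Some e \<Rightarrow> W e)"

definition gaussian_broadcast_model ::
  "'w measure \<Rightarrow> ('w \<Rightarrow> real) \<Rightarrow> (point \<times> point \<Rightarrow> 'w \<Rightarrow> real) \<Rightarrow> bool" where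
  "gaussian_broadcast_model M X0 W \<longleftrightarrow>
     prob_space M \<and>
     distributed M lborel X0 std_normal_density \<and>
     (\<forall>e\<in>cover_edges. distributed M lborel (W e) std_normal_density) \<and>
     prob_space.indep_vars M (\<lambda>_. borel) (noise_family X0 W) (insert None (Some ` cover_edges))"

end

theory Submission
  imports Defs "HOL-Library.Groups_Big_Fun" "HOL-Analysis.L2_Norm" "HOL-Analysis.Harmonic_Numbers"
begin

text \<open>Unfolding the recursion, \<open>X\<^sub>v\<close> is a linear combination of the independent standard
  Gaussians \<open>X\<^sub>0\<close> and \<open>W\<^sub>e\<close>, and the covariance of two points \<open>v, v'\<close> of rank \<open>n\<close> satisfies the
  same recursion as \<open>1 + (1/3) (q(0, v - v') + \<dots> + q(n - 1, v - v'))\<close>, where \<open>q(j, d)\<close> is the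
  probability that two independent trinomial walks differ by \<open>d\<close> at time \<open>j\<close>. The return
  probability \<open>q(j, 0)\<close> is of order \<open>1/j\<close> (Chebyshev and Cauchy-Schwarz from below, a binomial
  decomposition from above), which gives the logarithmic variance. For the covariance, the
  \<open>\<ell>\<^sup>2\<close> distance between the law of the walk and its translate by \<open>d\<close> is subadditive in \<open>d\<close>, so
  \<open>q(j, 0) - q(j, d) \<le> 9 |d|\<^sup>2 (q(j, 0) - q(j + 1, 0))\<close>; summed from \<open>j \<approx> M\<^sup>2\<close> on this
  telescopes to a constant, while the earlier times cost only a third of \<open>log t\<close>.\<close>

section \<open>The trinomial walk\<close>

definition unit_vec :: "nat \<Rightarrow> point" where
  "unit_vec i = (if i = 0 then (1,0,0) else if i = 1 then (0,1,0) else (0,0,1))"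

lemma pred_pt_eq_minus_unit_vec: "pred_pt i v = v - unit_vec i"
  by (cases v) (auto simp: pred_pt_def unit_vec_def)

lemma less_3_cases: "i < (3::nat) \<Longrightarrow> i = 0 \<or> i = 1 \<or> i = 2"
  by auto

lemma sum_lessThan_3: "(\<Sum>i<3. f i) = f 0 + f 1 + (f 2 :: real)" for f :: "nat \<Rightarrow> real"
  by (simp add: eval_nat_numeral)

lemma rank_minus_unit_vec: "i < 3 \<Longrightarrow> rank (v - unit_vec i) = rank v - 1"
  by (cases v) (auto simp: rank_def unit_vec_def)

lemma unit_vec_inj: "i < 3 \<Longrightarrow> j < 3 \<Longrightarrow> unit_vec i = unit_vec j \<Longrightarrow> i = j"
  by (auto simp: unit_vec_def dest!: less_3_cases split: if_splits)

text \<open>The law at time \<open>m\<close> of the walk on \<open>\<int>\<^sup>3\<close> started at the origin whose steps are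
  \<open>e\<^sub>0, e\<^sub>1, e\<^sub>2\<close> with probability \<open>1/3\<close> each.\<close>
definition trinomial :: "nat \<Rightarrow> point \<Rightarrow> real" where
  "trinomial m v = (case v of (a, b, c) \<Rightarrow>
     if 0 \<le> a \<and> 0 \<le> b \<and> 0 \<le> c \<and> a + b + c = int m
     then fact m / (fact (nat a) * fact (nat b) * fact (nat c) * 3 ^ m) else 0)"

lemma trinomial_nonneg: "0 \<le> trinomial m v"
  by (cases v) (auto simp: trinomial_def)

lemma fact_nat_eq_mult_pred: "1 \<le> a \<Longrightarrow> (fact (nat a) :: real) = real_of_int a * fact (nat (a - 1))"
proof -
  assume "1 \<le> a"
  then have "nat a = Suc (nat (a - 1))" by simp
  then show ?thesis using \<open>1 \<le> a\<close> by (simp add: of_nat_nat)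
qed

lemma trinomial_Suc: "trinomial (Suc m) v = (1/3) * (\<Sum>i<3. trinomial m (v - unit_vec i))"
proof (cases v)
  case (fields a b c)
  show ?thesis
  proof (cases "0 \<le> a \<and> 0 \<le> b \<and> 0 \<le> c \<and> a + b + c = int (Suc m)")
    case True
    let ?D = "fact (nat a) * fact (nat b) * fact (nat c) * (3::real) ^ m"
    have t1: "trinomial m (a - 1, b, c) = real_of_int a * fact m / ?D"
    proof (cases "a = 0")
      case False
      then have "1 \<le> a" using True by linarith
      then show ?thesis using True by (simp add: trinomial_def fact_nat_eq_mult_pred[of a] field_simps)
    qed (simp add: trinomial_def)
    have t2: "trinomial m (a, b - 1, c) = real_of_int b * fact m / ?D"
    proof (cases "b = 0")
      case False
      then have "1 \<le> b" using True by linarith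
      then show ?thesis using True by (simp add: trinomial_def fact_nat_eq_mult_pred[of b] field_simps)
    qed (simp add: trinomial_def)
    have t3: "trinomial m (a, b, c - 1) = real_of_int c * fact m / ?D"
    proof (cases "c = 0")
      case False
      then have "1 \<le> c" using True by linarith
      then show ?thesis using True by (simp add: trinomial_def fact_nat_eq_mult_pred[of c] field_simps)
    qed (simp add: trinomial_def)
    have abc: "real_of_int a + real_of_int b + real_of_int c = real (Suc m)"
      using True by (metis of_int_add of_int_of_nat_eq)
    have "trinomial (Suc m) v = fact (Suc m) / (3 * ?D)"
      using True fields by (simp add: trinomial_def field_simps)
    also have "\<dots> = (1/3) * ((real_of_int a + real_of_int b + real_of_int c) * fact m / ?D)"
      using abc by (simp add: field_simps)
    finally show ?thesis using fields t1 t2 t3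
      by (simp add: sum_lessThan_3 unit_vec_def add_divide_distrib distrib_right)
  next
    case False
    have "trinomial m (v - unit_vec i) = 0" for i
      using False fields by (auto simp: trinomial_def unit_vec_def)
    then show ?thesis using False fields by (simp add: trinomial_def)
  qed
qed

definition cube :: "nat \<Rightarrow> point set" where
  "cube m = {0..int m} \<times> {0..int m} \<times> {0..int m}"

lemma finite_cube [simp]: "finite (cube m)"
  by (simp add: cube_def)

lemma cube_0: "cube 0 = {(0, 0, 0)}"
  by (auto simp: cube_def)

lemma trinomial_nonzero_in_cube: "trinomial m y \<noteq> 0 \<Longrightarrow> y \<in> cube m"
  by (cases y) (auto simp: trinomial_def cube_def split: if_splits)

lemma trinomial_shift_nonzero: "trinomial m (y - d) \<noteq> 0 \<Longrightarrow> y \<in> (\<lambda>z. z + d) ` cube m"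
  by (rule image_eqI[of _ _ "y - d"]) (auto intro: trinomial_nonzero_in_cube)

lemma cube_mono_unit_vec: "y - unit_vec i \<in> cube m \<Longrightarrow> i < 3 \<Longrightarrow> y \<in> cube (Suc m)"
  by (cases y) (auto simp: cube_def unit_vec_def dest!: less_3_cases)

lemma Sum_any_translate: "Sum_any (\<lambda>y. f (y + d)) = Sum_any (f :: point \<Rightarrow> real)"
proof (rule Sum_any.reindex_cong[symmetric])
  show "bij (\<lambda>y::point. y + d)"
    by (rule bijI) (auto simp: inj_def intro: surjI[of _ "\<lambda>y. y - d"])
qed (simp add: comp_def)

lemma Sum_any_eq_sum:
  "finite A \<Longrightarrow> (\<And>y. g y \<noteq> 0 \<Longrightarrow> y \<in> A) \<Longrightarrow> Sum_any g = (\<Sum>y\<in>A. (g y :: real))"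
  by (rule Sum_any.expand_superset) auto

definition walk_expect :: "nat \<Rightarrow> (point \<Rightarrow> real) \<Rightarrow> real" where
  "walk_expect m f = (\<Sum>y\<in>cube m. trinomial m y * f y)"

lemma walk_expect_eq_Sum_any: "walk_expect m f = Sum_any (\<lambda>y. trinomial m y * f y)"
  unfolding walk_expect_def by (rule Sum_any_eq_sum[symmetric]) (auto intro: trinomial_nonzero_in_cube)

lemma walk_expect_0: "walk_expect 0 f = f (0, 0, 0)"
  by (simp add: walk_expect_def cube_0 trinomial_def)

lemma walk_expect_Suc:
  "walk_expect (Suc m) f = (1/3) * (\<Sum>i<3. walk_expect m (\<lambda>y. f (y + unit_vec i)))"
proof -
  have step: "(\<Sum>y\<in>cube (Suc m). trinomial m (y - unit_vec i) * f y)
      = walk_expect m (\<lambda>y. f (y + unit_vec i))" if "i < 3" for i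
  proof -
    have "(\<Sum>y\<in>cube (Suc m). trinomial m (y - unit_vec i) * f y)
        = Sum_any (\<lambda>y. trinomial m (y - unit_vec i) * f y)"
      by (rule Sum_any_eq_sum[symmetric])
        (auto intro: cube_mono_unit_vec[OF trinomial_nonzero_in_cube] that)
    also have "\<dots> = Sum_any (\<lambda>y. trinomial m (y + unit_vec i - unit_vec i) * f (y + unit_vec i))"
      by (rule Sum_any_translate[symmetric, where f = "\<lambda>y. trinomial m (y - unit_vec i) * f y"])
    finally show ?thesis by (simp add: walk_expect_eq_Sum_any)
  qed
  have "walk_expect (Suc m) f
      = (1/3) * (\<Sum>i<3. \<Sum>y\<in>cube (Suc m). trinomial m (y - unit_vec i) * f y)"
    unfolding walk_expect_def
    by (simp add: trinomial_Suc sum_distrib_right sum_distrib_left sum.swap[of _ "cube (Suc m)"])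
  then show ?thesis by (simp add: step)
qed

lemma walk_expect_scale: "walk_expect m (\<lambda>y. c * f y) = c * walk_expect m f"
  unfolding walk_expect_def by (simp add: sum_distrib_left mult_ac)

lemma walk_expect_sum: "walk_expect m (\<lambda>y. \<Sum>k\<in>K. g k y) = (\<Sum>k\<in>K. walk_expect m (g k))"
  unfolding walk_expect_def by (simp add: sum_distrib_left sum.swap[of _ K])

lemma walk_expect_add: "walk_expect m (\<lambda>y. f y + g y) = walk_expect m f + walk_expect m g"
  unfolding walk_expect_def by (simp add: distrib_left sum.distrib)

lemma walk_expect_one: "walk_expect m (\<lambda>y. 1) = 1"
  by (induction m) (simp_all add: walk_expect_0 walk_expect_Suc)

lemma walk_expect_add_const: "walk_expect m (\<lambda>y. f y + c) = walk_expect m f + c"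
  using walk_expect_add[of m f "\<lambda>y. c"] walk_expect_scale[of m c "\<lambda>y. 1"] walk_expect_one
  by simp

text \<open>\<open>meet_prob m d\<close> is the probability that two independent copies of the walk differ
  by \<open>d\<close> at time \<open>m\<close>.\<close>
definition meet_prob :: "nat \<Rightarrow> point \<Rightarrow> real" where
  "meet_prob m d = walk_expect m (\<lambda>y. trinomial m (y - d))"

lemma meet_prob_Suc:
  "meet_prob (Suc m) d = (1/9) * (\<Sum>i<3. \<Sum>k<3. meet_prob m (d - unit_vec i + unit_vec k))"
proof -
  have "meet_prob (Suc m) d = (1/3) * (\<Sum>i<3. walk_expect m (\<lambda>y. (1/3) *
      (\<Sum>k<3. trinomial m (y + unit_vec i - d - unit_vec k))))"
    unfolding meet_prob_def by (simp add: walk_expect_Suc trinomial_Suc)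
  then show ?thesis
    unfolding walk_expect_scale walk_expect_sum meet_prob_def
    by (simp add: sum_distrib_left algebra_simps)
qed

lemma meet_prob_0: "meet_prob 0 d = (if d = 0 then 1 else 0)"
  by (cases d) (auto simp: meet_prob_def walk_expect_0 trinomial_def zero_prod_def)

lemma meet_prob_nonneg: "0 \<le> meet_prob m d"
  unfolding meet_prob_def walk_expect_def by (intro sum_nonneg mult_nonneg_nonneg trinomial_nonneg)

text \<open>The covariance of two broadcast values at rank \<open>n\<close> whose positions differ by \<open>d\<close>.\<close>
definition cov_kernel :: "nat \<Rightarrow> point \<Rightarrow> real" where
  "cov_kernel n d = 1 + (1/3) * (\<Sum>j<n. meet_prob j d)"

lemma cov_kernel_Suc:
  "cov_kernel (Suc n) d = (1/9) * (\<Sum>i<3. \<Sum>k<3. cov_kernel n (d - unit_vec i + unit_vec k))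
     + (if d = 0 then 1/3 else 0)"
proof -
  have nine: "(\<Sum>i<(3::nat). \<Sum>k<(3::nat). (c::real)) = 9 * c" for c by simp
  have "cov_kernel (Suc n) d = 1 + (1/3) * meet_prob 0 d + (1/3) * (\<Sum>j<n. meet_prob (Suc j) d)"
    unfolding cov_kernel_def sum.lessThan_Suc_shift by (simp add: algebra_simps)
  then show ?thesis
    unfolding cov_kernel_def meet_prob_Suc meet_prob_0
    by (simp add: sum.distrib sum_distrib_left sum.swap[of _ "{..<n}"] algebra_simps nine)
qed

section \<open>The translation distance of the walk\<close>

text \<open>The \<open>\<ell>\<^sup>2\<close> distance between the law of the walk and its translate by \<open>d\<close>;
  its square is \<open>2 (meet_prob m 0 - meet_prob m d)\<close>, so the triangle inequality for it
  controls how fast \<open>meet_prob m d\<close> falls off in \<open>d\<close>.\<close>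
definition shift_dist :: "nat \<Rightarrow> point \<Rightarrow> real" where
  "shift_dist m d = sqrt (Sum_any (\<lambda>y. (trinomial m y - trinomial m (y - d))\<^sup>2))"

lemma shift_dist_nonneg: "0 \<le> shift_dist m d"
  unfolding shift_dist_def Sum_any.expand_set by (intro real_sqrt_ge_zero sum_nonneg) simp

lemma Sum_any_trinomial_sq: "Sum_any (\<lambda>y. (trinomial m (y - d))\<^sup>2) = meet_prob m 0"
proof -
  have "Sum_any (\<lambda>y. (trinomial m (y - d))\<^sup>2) = Sum_any (\<lambda>y. (trinomial m y)\<^sup>2)"
    using Sum_any_translate[of "\<lambda>y. (trinomial m y)\<^sup>2" "-d"] by simp
  then show ?thesis
    unfolding meet_prob_def walk_expect_eq_Sum_any by (simp add: power2_eq_square)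
qed

lemma shift_dist_sq: "(shift_dist m d)\<^sup>2 = 2 * meet_prob m 0 - 2 * meet_prob m d"
proof -
  let ?F = "cube m \<union> (\<lambda>z. z + d) ` cube m"
  have fin: "finite ?F" by simp
  have supp: "y \<in> ?F" if "trinomial m y \<noteq> 0 \<or> trinomial m (y - d) \<noteq> 0" for y
    using that trinomial_nonzero_in_cube trinomial_shift_nonzero by blast
  have sq: "Sum_any (\<lambda>y. (trinomial m y)\<^sup>2) = (\<Sum>y\<in>?F. (trinomial m y)\<^sup>2)"
    "Sum_any (\<lambda>y. (trinomial m (y - d))\<^sup>2) = (\<Sum>y\<in>?F. (trinomial m (y - d))\<^sup>2)"
    "Sum_any (\<lambda>y. trinomial m y * trinomial m (y - d)) = (\<Sum>y\<in>?F. trinomial m y * trinomial m (y - d))"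
    by (rule Sum_any_eq_sum[OF fin]; use supp in force)+
  have "Sum_any (\<lambda>y. (trinomial m y - trinomial m (y - d))\<^sup>2)
      = (\<Sum>y\<in>?F. (trinomial m y - trinomial m (y - d))\<^sup>2)"
    by (rule Sum_any_eq_sum[OF fin]) (use supp in force)
  also have "\<dots> = (\<Sum>y\<in>?F. (trinomial m y)\<^sup>2) - 2 * (\<Sum>y\<in>?F. trinomial m y * trinomial m (y - d))
      + (\<Sum>y\<in>?F. (trinomial m (y - d))\<^sup>2)"
    by (simp add: power2_diff sum.distrib sum_subtractf sum_distrib_left mult_ac)
  also have "\<dots> = 2 * meet_prob m 0 - 2 * meet_prob m d"
    using Sum_any_trinomial_sq[of m 0] Sum_any_trinomial_sq[of m d]
    unfolding sq[symmetric] meet_prob_def walk_expect_eq_Sum_any by simp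
  finally have "Sum_any (\<lambda>y. (trinomial m y - trinomial m (y - d))\<^sup>2)
      = 2 * meet_prob m 0 - 2 * meet_prob m d" .
  moreover have "0 \<le> Sum_any (\<lambda>y. (trinomial m y - trinomial m (y - d))\<^sup>2)"
    unfolding Sum_any.expand_set by (intro sum_nonneg) simp
  ultimately show ?thesis unfolding shift_dist_def by simp
qed

lemma meet_prob_le_meet_prob_0: "meet_prob m d \<le> meet_prob m 0"
  using shift_dist_sq[of m d] zero_le_power2[of "shift_dist m d"] by linarith

lemma trinomial_shift_diff_nonzero:
  "trinomial m (y - d1) - trinomial m (y - d2) \<noteq> 0
     \<Longrightarrow> y \<in> (\<lambda>z. z + d1) ` cube m \<union> (\<lambda>z. z + d2) ` cube m"
  using trinomial_shift_nonzero[of m y d1] trinomial_shift_nonzero[of m y d2]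
  by (cases "trinomial m (y - d1) = 0") auto

lemma shift_dist_add_le: "shift_dist m (d1 + d2) \<le> shift_dist m d1 + shift_dist m d2"
proof -
  let ?F = "cube m \<union> (\<lambda>z. z + d1) ` cube m \<union> (\<lambda>z. z + (d1 + d2)) ` cube m"
  let ?f = "\<lambda>d y. trinomial m (y - d)"
  have fin: "finite ?F" by simp
  have L2: "sqrt (Sum_any (\<lambda>y. (?f a y - ?f b y)\<^sup>2)) = L2_set (\<lambda>y. ?f a y - ?f b y) ?F"
    if "a \<in> {0, d1}" "b \<in> {d1, d1 + d2}" for a b
    unfolding L2_set_def
  proof (subst Sum_any_eq_sum[OF fin])
    show "y \<in> ?F" if "(?f a y - ?f b y)\<^sup>2 \<noteq> 0" for y
      using trinomial_shift_diff_nonzero[of m y a b] that \<open>a \<in> {0, d1}\<close> \<open>b \<in> {d1, d1 + d2}\<close>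
      by auto
  qed simp
  have "shift_dist m d2 = sqrt (Sum_any (\<lambda>y. (?f d1 y - ?f (d1 + d2) y)\<^sup>2))"
    unfolding shift_dist_def using Sum_any_translate[of "\<lambda>y. (?f 0 y - ?f d2 y)\<^sup>2" "-d1"]
    by (simp add: algebra_simps)
  then have "shift_dist m d2 = L2_set (\<lambda>y. ?f d1 y - ?f (d1 + d2) y) ?F"
    using L2[of d1 "d1 + d2"] by simp
  moreover have "shift_dist m d1 = L2_set (\<lambda>y. ?f 0 y - ?f d1 y) ?F"
    using L2[of 0 d1] by (simp add: shift_dist_def)
  moreover have "shift_dist m (d1 + d2) = L2_set (\<lambda>y. ?f 0 y - ?f (d1 + d2) y) ?F"
    using L2[of 0 "d1 + d2"] by (simp add: shift_dist_def)
  moreover have "L2_set (\<lambda>y. ?f 0 y - ?f (d1 + d2) y) ?F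
      \<le> L2_set (\<lambda>y. ?f 0 y - ?f d1 y) ?F + L2_set (\<lambda>y. ?f d1 y - ?f (d1 + d2) y) ?F"
    using L2_set_triangle_ineq[of "\<lambda>y. ?f 0 y - ?f d1 y" "\<lambda>y. ?f d1 y - ?f (d1 + d2) y" ?F]
    by simp
  ultimately show ?thesis by simp
qed

lemma shift_dist_uminus: "shift_dist m (- d) = shift_dist m d"
proof -
  have "Sum_any (\<lambda>y. (trinomial m y - trinomial m (y - - d))\<^sup>2)
      = Sum_any (\<lambda>y. (trinomial m (y - d) - trinomial m y)\<^sup>2)"
    using Sum_any_translate[of "\<lambda>y. (trinomial m y - trinomial m (y + d))\<^sup>2" "-d"] by simp
  then show ?thesis unfolding shift_dist_def by (simp add: power2_commute)
qed

definition scale_pt :: "int \<Rightarrow> point \<Rightarrow> point" where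
  "scale_pt k v = (case v of (a, b, c) \<Rightarrow> (k * a, k * b, k * c))"

lemma shift_dist_scale_nat_le: "shift_dist m (scale_pt (int n) u) \<le> real n * shift_dist m u"
proof (induction n)
  case 0
  have "scale_pt 0 u = 0" by (cases u) (simp add: scale_pt_def zero_prod_def)
  then show ?case by (simp add: shift_dist_def)
next
  case (Suc n)
  have "scale_pt (int (Suc n)) u = scale_pt (int n) u + u"
    by (cases u) (simp add: scale_pt_def algebra_simps)
  then show ?case using shift_dist_add_le[of m "scale_pt (int n) u" u] Suc by (simp add: algebra_simps)
qed

lemma shift_dist_scale_le: "shift_dist m (scale_pt k u) \<le> \<bar>real_of_int k\<bar> * shift_dist m u"
proof (cases "0 \<le> k")
  case True
  then show ?thesis using shift_dist_scale_nat_le[of m "nat k" u] by simp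
next
  case False
  have "scale_pt k u = - scale_pt (int (nat (-k))) u" using False by (cases u) (simp add: scale_pt_def)
  then show ?thesis using shift_dist_scale_nat_le[of m "nat (-k)" u] shift_dist_uminus False by simp
qed

text \<open>Only two of the nine terms of \<open>meet_prob_Suc\<close> at \<open>d = 0\<close> are needed: the others are
  bounded by \<open>meet_prob m 0\<close>.\<close>
lemma meet_prob_axis_gaps:
  "(meet_prob m 0 - meet_prob m (1, 0, -1)) + (meet_prob m 0 - meet_prob m (0, 1, -1))
     \<le> 9 * (meet_prob m 0 - meet_prob (Suc m) 0)"
proof -
  have "9 * meet_prob (Suc m) 0 = (\<Sum>i<3. \<Sum>k<3. meet_prob m (0 - unit_vec i + unit_vec k))"
    by (simp add: meet_prob_Suc)
  then show ?thesis
    by (simp add: sum_lessThan_3 unit_vec_def zero_prod_def)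
      (smt (verit) meet_prob_le_meet_prob_0[unfolded zero_prod_def])
qed

lemma meet_prob_gap_le:
  "meet_prob m 0 - meet_prob m (x, y, - x - y)
     \<le> 9 * (real_of_int x ^ 2 + real_of_int y ^ 2) * (meet_prob m 0 - meet_prob (Suc m) 0)"
proof -
  let ?u1 = "(1, 0, -1) :: point" and ?u2 = "(0, 1, -1) :: point"
  let ?x = "\<bar>real_of_int x\<bar>" and ?y = "\<bar>real_of_int y\<bar>"
  have "(x, y, - x - y) = scale_pt x ?u1 + scale_pt y ?u2" by (simp add: scale_pt_def)
  then have "shift_dist m (x, y, - x - y) \<le> shift_dist m (scale_pt x ?u1) + shift_dist m (scale_pt y ?u2)"
    by (simp add: shift_dist_add_le)
  also have "\<dots> \<le> ?x * shift_dist m ?u1 + ?y * shift_dist m ?u2"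
    by (intro add_mono shift_dist_scale_le)
  finally have "(shift_dist m (x, y, - x - y))\<^sup>2 \<le> (?x * shift_dist m ?u1 + ?y * shift_dist m ?u2)\<^sup>2"
    using shift_dist_nonneg by (intro power_mono) auto
  also have "\<dots> \<le> (?x\<^sup>2 + ?y\<^sup>2) * ((shift_dist m ?u1)\<^sup>2 + (shift_dist m ?u2)\<^sup>2)"
    using Cauchy_Schwarz_ineq_sum[of "\<lambda>b. if b then ?x else ?y"
        "\<lambda>b. if b then shift_dist m ?u1 else shift_dist m ?u2" UNIV]
    by (simp add: UNIV_bool add.commute)
  also have "\<dots> \<le> (real_of_int x ^ 2 + real_of_int y ^ 2) * (18 * (meet_prob m 0 - meet_prob (Suc m) 0))"
    unfolding shift_dist_sq power2_abs using meet_prob_axis_gaps[of m] by (intro mult_left_mono) auto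
  finally show ?thesis unfolding shift_dist_sq by (simp add: algebra_simps)
qed

section \<open>A lower bound for the return probability\<close>

definition coord :: "nat \<Rightarrow> point \<Rightarrow> real" where
  "coord k v = (case v of (a, b, c) \<Rightarrow> real_of_int (if k = 0 then a else if k = 1 then b else c))"

lemma coord_add_unit_vec:
  "i < 3 \<Longrightarrow> k < 3 \<Longrightarrow> coord k (y + unit_vec i) = coord k y + (if i = k then 1 else 0)"
  by (cases y) (auto simp: coord_def unit_vec_def dest!: less_3_cases)

lemma walk_expect_coord: "k < 3 \<Longrightarrow> walk_expect m (coord k) = real m / 3"
proof (induction m)
  case 0
  then show ?case by (simp add: walk_expect_0 coord_def)
next
  case (Suc m)
  then have "walk_expect m (\<lambda>y. coord k (y + unit_vec i)) = real m / 3 + (if i = k then 1 else 0)"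
    if "i < 3" for i
    using that by (simp add: coord_add_unit_vec walk_expect_add_const)
  then have "(\<Sum>i<3. walk_expect m (\<lambda>y. coord k (y + unit_vec i)))
      = (\<Sum>i<(3::nat). real m / 3) + (\<Sum>i<3. if i = k then 1 else 0)"
    by (simp only: sum.distrib[symmetric]) (intro sum.cong, auto)
  then show ?case
    using Suc.prems by (simp add: walk_expect_Suc sum.distrib field_simps)
qed

lemma walk_expect_quadratic:
  "walk_expect m (\<lambda>y. (f y)\<^sup>2 + c * f y + k) = walk_expect m (\<lambda>y. (f y)\<^sup>2) + c * walk_expect m f + k"
  by (simp add: walk_expect_add_const walk_expect_add walk_expect_scale)

lemma walk_expect_coord_sq: "k < 3 \<Longrightarrow> walk_expect m (\<lambda>y. (coord k y)\<^sup>2) = real m * (real m + 2) / 9"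
proof (induction m)
  case 0
  then show ?case by (simp add: walk_expect_0 coord_def)
next
  case (Suc m)
  have "walk_expect m (\<lambda>y. (coord k (y + unit_vec i))\<^sup>2)
      = real m * (real m + 2) / 9 + (if i = k then 2 * real m / 3 + 1 else 0)" if "i < 3" for i
  proof -
    have "walk_expect m (\<lambda>y. (coord k (y + unit_vec i))\<^sup>2)
        = walk_expect m (\<lambda>y. (coord k y)\<^sup>2 + (if i = k then 2 else 0) * coord k y + (if i = k then 1 else 0))"
      using that Suc.prems by (simp add: coord_add_unit_vec power2_eq_square algebra_simps)
    then show ?thesis
      unfolding walk_expect_quadratic using Suc walk_expect_coord[of k m] by simp
  qed
  then have "walk_expect (Suc m) (\<lambda>y. (coord k y)\<^sup>2)
      = real m * (real m + 2) / 9 + (1/3) * (\<Sum>i<3. if i = k then 2 * real m / 3 + 1 else 0)"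
    by (simp add: walk_expect_Suc sum.distrib)
  also have "\<dots> = real (Suc m) * (real (Suc m) + 2) / 9"
    using Suc.prems by (auto simp: field_simps dest!: less_3_cases)
  finally show ?case .
qed

lemma walk_coord_variance: "k < 3 \<Longrightarrow> walk_expect m (\<lambda>y. (coord k y - real m / 3)\<^sup>2) = 2 * real m / 9"
proof -
  assume k: "k < 3"
  have "walk_expect m (\<lambda>y. (coord k y - real m / 3)\<^sup>2)
      = walk_expect m (\<lambda>y. (coord k y)\<^sup>2 + (- 2 * (real m / 3)) * coord k y + (real m / 3)\<^sup>2)"
    by (simp add: power2_diff algebra_simps)
  then show ?thesis
    unfolding walk_expect_quadratic walk_expect_coord[OF k] walk_expect_coord_sq[OF k]
    by (simp add: field_simps power2_eq_square)
qed

lemma card_int_interval_le: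
  fixes lo hi :: real
  assumes "lo \<le> hi"
  shows "real (card {a::int. lo \<le> real_of_int a \<and> real_of_int a \<le> hi}) \<le> hi - lo + 1"
proof -
  have "{a::int. lo \<le> real_of_int a \<and> real_of_int a \<le> hi} = {\<lceil>lo\<rceil>..\<lfloor>hi\<rfloor>}"
    by (auto simp: ceiling_le_iff le_floor_iff)
  then have card: "card {a::int. lo \<le> real_of_int a \<and> real_of_int a \<le> hi} = nat (\<lfloor>hi\<rfloor> - \<lceil>lo\<rceil> + 1)"
    by simp
  have floor: "real_of_int \<lfloor>hi\<rfloor> \<le> hi" and ceiling: "lo \<le> real_of_int \<lceil>lo\<rceil>"
    by (rule of_int_floor_le, rule le_of_int_ceiling)
  show ?thesis
  proof (cases "\<lfloor>hi\<rfloor> - \<lceil>lo\<rceil> + 1 \<le> 0")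
    case True
    then show ?thesis unfolding card using assms by simp
  next
    case False
    then have "real (nat (\<lfloor>hi\<rfloor> - \<lceil>lo\<rceil> + 1)) = real_of_int \<lfloor>hi\<rfloor> - real_of_int \<lceil>lo\<rceil> + 1"
      by (simp add: of_nat_nat)
    then show ?thesis unfolding card using floor ceiling by linarith
  qed
qed

definition walk_bulk :: "nat \<Rightarrow> point set" where
  "walk_bulk m = {y \<in> cube m. trinomial m y \<noteq> 0
     \<and> \<bar>coord 0 y - real m / 3\<bar> \<le> sqrt (real m) \<and> \<bar>coord 1 y - real m / 3\<bar> \<le> sqrt (real m)}"

lemma walk_bulk_subset: "walk_bulk m \<subseteq> cube m"
  by (auto simp: walk_bulk_def)

text \<open>Chebyshev's inequality in each of the two coordinates.\<close>
lemma walk_bulk_mass: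
  assumes "1 \<le> m"
  shows "5 / 9 \<le> (\<Sum>y\<in>walk_bulk m. trinomial m y)"
proof -
  let ?mu = "real m / 3"
  let ?q = "\<lambda>y. (coord 0 y - ?mu)\<^sup>2 / real m + (coord 1 y - ?mu)\<^sup>2 / real m"
  have mpos: "0 < real m" using assms by simp
  have outside: "trinomial m y \<le> trinomial m y * ?q y" if "y \<in> cube m - walk_bulk m" for y
  proof (cases "trinomial m y = 0")
    case False
    have sqrt_less: "sqrt (real m) < \<bar>x\<bar> \<Longrightarrow> real m < x\<^sup>2" for x
      by (metis real_sqrt_abs real_sqrt_less_iff)
    from False that have "real m < (coord 0 y - ?mu)\<^sup>2 \<or> real m < (coord 1 y - ?mu)\<^sup>2"
      unfolding walk_bulk_def by (auto simp flip: not_less intro: sqrt_less)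
    then have "1 \<le> ?q y"
      using mpos by (auto simp: field_simps add_increasing add_increasing2)
    then show ?thesis using trinomial_nonneg[of m y] by (simp add: mult_le_cancel_left1)
  qed simp
  have "(\<Sum>y\<in>cube m - walk_bulk m. trinomial m y) \<le> (\<Sum>y\<in>cube m - walk_bulk m. trinomial m y * ?q y)"
    by (rule sum_mono) (rule outside)
  also have "\<dots> \<le> (\<Sum>y\<in>cube m. trinomial m y * ?q y)"
    by (rule sum_mono2) (auto intro!: mult_nonneg_nonneg trinomial_nonneg)
  also have "\<dots> = walk_expect m (\<lambda>y. (coord 0 y - ?mu)\<^sup>2) / real m
      + walk_expect m (\<lambda>y. (coord 1 y - ?mu)\<^sup>2) / real m"
    unfolding walk_expect_def by (simp add: distrib_left sum.distrib sum_divide_distrib)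
  also have "\<dots> = 4 / 9"
    using mpos by (simp add: walk_coord_variance)
  finally have "(\<Sum>y\<in>cube m - walk_bulk m. trinomial m y) \<le> 4 / 9" .
  moreover have "(\<Sum>y\<in>cube m. trinomial m y) = 1"
    using walk_expect_one[of m] by (simp add: walk_expect_def)
  moreover have "(\<Sum>y\<in>cube m. trinomial m y)
      = (\<Sum>y\<in>walk_bulk m. trinomial m y) + (\<Sum>y\<in>cube m - walk_bulk m. trinomial m y)"
    using sum.subset_diff[OF walk_bulk_subset[of m] finite_cube, of "trinomial m"] by linarith
  ultimately show ?thesis by linarith
qed

lemma card_walk_bulk_le:
  assumes "1 \<le> m"
  shows "real (card (walk_bulk m)) \<le> 9 * real m"
proof -
  let ?s = "sqrt (real m)" and ?mu = "real m / 3"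
  define I where "I = {a::int. ?mu - ?s \<le> real_of_int a \<and> real_of_int a \<le> ?mu + ?s}"
  have s1: "1 \<le> ?s" using assms by simp
  have "real (card I) \<le> 2 * ?s + 1"
    using card_int_interval_le[of "?mu - ?s" "?mu + ?s"] s1 unfolding I_def by simp
  then have card_I: "real (card I) \<le> 3 * ?s"
    using s1 by linarith
  have "I = {\<lceil>?mu - ?s\<rceil>..\<lfloor>?mu + ?s\<rfloor>}"
    unfolding I_def by (auto simp: ceiling_le_iff le_floor_iff)
  then have fin: "finite I" by simp
  have "walk_bulk m \<subseteq> (\<lambda>(a, b). (a, b, int m - a - b)) ` (I \<times> I)"
  proof
    fix y assume y: "y \<in> walk_bulk m"
    obtain a b c where abc: "y = (a, b, c)" by (cases y)
    with y have "a \<in> I" "b \<in> I" "c = int m - a - b"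
      unfolding walk_bulk_def I_def coord_def
      by (auto simp: abs_le_iff trinomial_def split: if_splits)
    then show "y \<in> (\<lambda>(a, b). (a, b, int m - a - b)) ` (I \<times> I)"
      unfolding abc by (auto intro: image_eqI[of _ _ "(a, b)"])
  qed
  then have "card (walk_bulk m) \<le> card (I \<times> I)"
    using fin by (meson card_image_le card_mono finite_SigmaI finite_imageI order_trans)
  then have "real (card (walk_bulk m)) \<le> real (card I) * real (card I)"
    by (metis card_cartesian_product of_nat_le_iff of_nat_mult)
  also have "\<dots> \<le> (3 * ?s) * (3 * ?s)"
    using card_I by (intro mult_mono) auto
  finally show ?thesis by simp
qed

lemma meet_prob_0_lower:
  assumes "1 \<le> m"
  shows "1 / (36 * real m) \<le> meet_prob m 0"
proof -
  let ?A = "walk_bulk m"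
  have "(5/9)\<^sup>2 \<le> (\<Sum>y\<in>?A. trinomial m y)\<^sup>2"
    using walk_bulk_mass[OF assms] by (intro power_mono) auto
  also have "\<dots> \<le> (\<Sum>y\<in>?A. (trinomial m y)\<^sup>2) * real (card ?A)"
    by (rule sum_squared_le_sum_of_squares)
  also have "\<dots> \<le> meet_prob m 0 * (9 * real m)"
  proof (rule mult_mono)
    have "(\<Sum>y\<in>?A. (trinomial m y)\<^sup>2) \<le> (\<Sum>y\<in>cube m. (trinomial m y)\<^sup>2)"
      by (rule sum_mono2) (use walk_bulk_subset in auto)
    then show "(\<Sum>y\<in>?A. (trinomial m y)\<^sup>2) \<le> meet_prob m 0"
      by (simp add: meet_prob_def walk_expect_def power2_eq_square)
  qed (use card_walk_bulk_le[OF assms] meet_prob_nonneg in auto)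
  finally show ?thesis using assms by (simp add: field_simps)
qed

section \<open>An upper bound for the return probability\<close>

definition central_binom :: "nat \<Rightarrow> real" where
  "central_binom n = real ((2 * n) choose n) / 4 ^ n"

lemma central_binom_nonneg: "0 \<le> central_binom n"
  by (simp add: central_binom_def)

lemma binomial_diag_eq_fact: "real ((2 * n) choose n) = fact (2 * n) / (fact n * fact n)"
  using binomial_fact[of n "2 * n", where 'a = real] by (simp add: mult_2)

lemma central_binom_Suc:
  "central_binom (Suc n) = central_binom n * (2 * real n + 1) / (2 * real n + 2)"
proof -
  define y where "y = real n + 1"
  have cancel: "(2 * y) * ((2 * y - 1) * F) / ((y * f) * (y * f)) / (4 * P) = F / (f * f) / P * (2 * y - 1) / (2 * y)"
    if "0 < f" "0 < P" for F f P :: real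
  proof -
    have "0 < y" by (simp add: y_def)
    with that show ?thesis by (simp add: field_simps)
  qed
  have fact_double: "(fact (2 * Suc n) :: real) = (2 * y) * ((2 * y - 1) * fact (2 * n))"
    unfolding y_def by (simp add: algebra_simps)
  have fact_Suc: "(fact (Suc n) :: real) = y * fact n"
    unfolding y_def by simp
  have "central_binom (Suc n)
      = (2 * y) * ((2 * y - 1) * fact (2 * n)) / ((y * fact n) * (y * fact n)) / (4 * 4 ^ n)"
    unfolding central_binom_def binomial_diag_eq_fact[of "Suc n"] fact_double fact_Suc by simp
  also have "\<dots> = central_binom n * (2 * y - 1) / (2 * y)"
    unfolding central_binom_def binomial_diag_eq_fact by (rule cancel) auto
  finally show ?thesis by (simp add: y_def algebra_simps)
qed

lemma central_binom_sq_mul_le: "(central_binom n)\<^sup>2 * (3 * real n + 1) \<le> 1"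
proof (induction n)
  case 0
  then show ?case by (simp add: central_binom_def)
next
  case (Suc n)
  let ?x = "real n"
  let ?r = "(2 * ?x + 1)\<^sup>2 * (3 * ?x + 4) / ((3 * ?x + 1) * (2 * ?x + 2)\<^sup>2)"
  have pos: "0 < 3 * ?x + 1" "0 < 2 * ?x + 2" by linarith+
  have "(central_binom (Suc n))\<^sup>2 * (3 * real (Suc n) + 1) = ((central_binom n)\<^sup>2 * (3 * ?x + 1)) * ?r"
    using pos by (simp add: central_binom_Suc power_divide power_mult_distrib)
  also have "\<dots> \<le> 1 * 1"
  proof (rule mult_mono)
    have "(2 * ?x + 1)\<^sup>2 * (3 * ?x + 4) \<le> (3 * ?x + 1) * (2 * ?x + 2)\<^sup>2"
      by (simp add: power2_eq_square algebra_simps)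
    then show "?r \<le> 1"
      using pos by (subst pos_divide_le_eq) auto
  qed (use Suc.IH in auto)
  finally show ?case by simp
qed

lemma central_binom_sq_le_div:
  assumes "0 < b" "b \<le> c * (3 * real n + 1)"
  shows "(central_binom n)\<^sup>2 \<le> c / b"
proof -
  have "0 < c * (3 * real n + 1)" using assms by linarith
  then have "0 < c" by (simp add: zero_less_mult_iff)
  have "(central_binom n)\<^sup>2 * b \<le> (central_binom n)\<^sup>2 * (c * (3 * real n + 1))"
    using assms by (intro mult_left_mono) auto
  also have "\<dots> = c * ((central_binom n)\<^sup>2 * (3 * real n + 1))"
    by (simp only: mult_ac)
  also have "\<dots> \<le> c"
    using mult_left_mono[OF central_binom_sq_mul_le[of n], of c] \<open>0 < c\<close> by simp
  finally show ?thesis using assms by (simp add: pos_le_divide_eq)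
qed

lemma binomial_div_pow2_sq_le: "(real (j choose k) / 2 ^ j)\<^sup>2 \<le> 2 / (real j + 1)"
proof -
  have "(real (j choose k) / 2 ^ j)\<^sup>2 \<le> (real (j choose (j div 2)) / 2 ^ j)\<^sup>2"
    using binomial_maximum[of j k] by (intro power_mono divide_right_mono) auto
  also have "\<dots> \<le> 2 / (real j + 1)"
  proof (cases "even j")
    case True
    then obtain i where j: "j = 2 * i" by auto
    have "real (j choose (j div 2)) / 2 ^ j = central_binom i"
      unfolding j central_binom_def by (simp add: power_mult)
    moreover have "(central_binom i)\<^sup>2 \<le> 2 / (real j + 1)"
      unfolding j by (rule central_binom_sq_le_div) auto
    ultimately show ?thesis by simp
  next
    case False
    then obtain i where j: "j = 2 * i + 1" using oddE by blast
    have "(2 * Suc i) choose Suc i = (Suc (2 * i) choose i) + (Suc (2 * i) choose Suc i)"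
      by simp
    also have "Suc (2 * i) choose Suc i = Suc (2 * i) choose i"
      using binomial_symmetric[of "Suc i" "Suc (2 * i)"] by simp
    finally have "real ((2 * Suc i) choose Suc i) = 2 * real (j choose (j div 2))"
      by (simp add: j)
    then have "real (j choose (j div 2)) / 2 ^ j = central_binom (Suc i)"
      unfolding central_binom_def j by (simp add: power_mult)
    moreover have "(central_binom (Suc i))\<^sup>2 \<le> 2 / (real j + 1)"
      unfolding j by (rule central_binom_sq_le_div) auto
    ultimately show ?thesis by simp
  qed
  finally show ?thesis .
qed

lemma sum_binomial_pow2_eq: "(\<Sum>k\<le>n. real (n choose k) * 2 ^ k) = 3 ^ n"
  using binomial_ring[of "2::real" 1 n] by simp

lemma sum_binomial_pow2_div_Suc_le:
  "(\<Sum>j\<le>m. real (m choose j) * 2 ^ j / (real j + 1)) \<le> 3 ^ Suc m / (2 * (real m + 1))"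
proof -
  have ratio: "real (m choose j) / (real j + 1) = real (Suc m choose Suc j) / (real m + 1)" for j
  proof -
    have "real (Suc m) * real (m choose j) = real (Suc m choose Suc j) * real (Suc j)"
      using Suc_times_binomial_eq[of m j] by (metis of_nat_mult)
    then show ?thesis by (simp add: field_simps)
  qed
  have "real (m choose j) * 2 ^ j / (real j + 1) = real (Suc m choose Suc j) * 2 ^ Suc j / (2 * (real m + 1))"
    for j
  proof -
    have "real (m choose j) * 2 ^ j / (real j + 1) = real (m choose j) / (real j + 1) * 2 ^ j"
      by simp
    also have "\<dots> = real (Suc m choose Suc j) / (real m + 1) * 2 ^ j"
      by (simp only: ratio)
    finally show ?thesis by (simp add: field_simps del: binomial_Suc_Suc)
  qed
  then have "(\<Sum>j\<le>m. real (m choose j) * 2 ^ j / (real j + 1))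
      = (\<Sum>j\<le>m. real (Suc m choose Suc j) * 2 ^ Suc j) / (2 * (real m + 1))"
    by (simp add: sum_divide_distrib)
  also have "(\<Sum>j\<le>m. real (Suc m choose Suc j) * 2 ^ Suc j) = 3 ^ Suc m - 1"
    using sum_binomial_pow2_eq[of "Suc m"] by (simp add: sum.atMost_Suc_shift del: sum.atMost_Suc)
  finally show ?thesis by (simp add: divide_right_mono)
qed

lemma sum_binomial_mult_binomial:
  assumes "k \<le> m"
  shows "(\<Sum>j\<le>m. (m choose j) * (j choose k)) = (m choose k) * 2 ^ (m - k)"
proof -
  have "(\<Sum>j\<le>m. (m choose j) * (j choose k)) = (\<Sum>j\<in>{k..m}. (m choose j) * (j choose k))"
    by (rule sum.mono_neutral_right) auto
  also have "\<dots> = (\<Sum>j\<in>{k..m}. (m choose k) * ((m - k) choose (j - k)))"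
    by (rule sum.cong) (auto simp: choose_mult)
  also have "\<dots> = (m choose k) * (\<Sum>j\<in>{k..m}. (m - k) choose (j - k))"
    by (simp add: sum_distrib_left)
  also have "(\<Sum>j\<in>{k..m}. (m - k) choose (j - k)) = (\<Sum>i\<in>{0..m - k}. (m - k) choose i)"
  proof -
    have "{k..m} = {0 + k..(m - k) + k}" using assms by simp
    then show ?thesis by (simp only: sum.shift_bounds_cl_nat_ivl) simp
  qed
  finally show ?thesis by (simp add: atLeast0AtMost choose_row_sum)
qed

text \<open>The law of \<open>a + b\<close> for \<open>(a, b, c)\<close> distributed as \<open>trinomial m\<close>.\<close>
definition binom_weight :: "nat \<Rightarrow> nat \<Rightarrow> real" where
  "binom_weight m n = real (m choose n) * 2 ^ n / 3 ^ m"

lemma binom_weight_nonneg: "0 \<le> binom_weight m n"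
  by (simp add: binom_weight_def)

lemma sum_binom_weight: "(\<Sum>n\<le>m. binom_weight m n) = 1"
  unfolding binom_weight_def using sum_binomial_pow2_eq[of m] by (simp flip: sum_divide_distrib)

lemma sum_binom_weight_div_Suc_le: "(\<Sum>n\<le>m. binom_weight m n / (real n + 1)) \<le> 3 / (2 * (real m + 1))"
proof -
  have "(\<Sum>n\<le>m. binom_weight m n / (real n + 1))
      = (\<Sum>j\<le>m. real (m choose j) * 2 ^ j / (real j + 1)) / 3 ^ m"
    unfolding binom_weight_def by (simp add: sum_divide_distrib mult.commute)
  also have "\<dots> \<le> (3 ^ Suc m / (2 * (real m + 1))) / 3 ^ m"
    by (rule divide_right_mono[OF sum_binomial_pow2_div_Suc_le]) simp
  finally show ?thesis by simp
qed

lemma weighted_Cauchy_Schwarz: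
  fixes w d :: "'a \<Rightarrow> real"
  assumes "\<And>j. j \<in> A \<Longrightarrow> 0 \<le> w j"
  shows "(\<Sum>j\<in>A. w j * d j)\<^sup>2 \<le> (\<Sum>j\<in>A. w j) * (\<Sum>j\<in>A. w j * (d j)\<^sup>2)"
proof -
  have "(\<Sum>j\<in>A. sqrt (w j) * (sqrt (w j) * d j))\<^sup>2
      \<le> (\<Sum>j\<in>A. (sqrt (w j))\<^sup>2) * (\<Sum>j\<in>A. (sqrt (w j) * d j)\<^sup>2)"
    by (rule Cauchy_Schwarz_ineq_sum)
  moreover have "(\<Sum>j\<in>A. sqrt (w j) * (sqrt (w j) * d j)) = (\<Sum>j\<in>A. w j * d j)"
    by (rule sum.cong) (use assms in \<open>auto simp: real_sqrt_mult_self mult.assoc[symmetric]\<close>)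
  moreover have "(\<Sum>j\<in>A. (sqrt (w j))\<^sup>2) = (\<Sum>j\<in>A. w j)"
    by (rule sum.cong) (use assms in auto)
  moreover have "(\<Sum>j\<in>A. (sqrt (w j) * d j)\<^sup>2) = (\<Sum>j\<in>A. w j * (d j)\<^sup>2)"
    by (rule sum.cong) (use assms in \<open>auto simp: power_mult_distrib\<close>)
  ultimately show ?thesis by simp
qed

text \<open>Thinning: \<open>binom_weight m n\<close> is an average of the binomial laws \<open>Bin(j, 1/2)\<close> at the point
  \<open>m - n\<close>, with weights \<open>binom_weight m j\<close>.\<close>
lemma binom_weight_sq_le:
  assumes "n \<le> m"
  shows "(binom_weight m n)\<^sup>2 \<le> 3 / (real m + 1)"
proof -
  let ?k = "m - n"
  have "real (m choose n) * 2 ^ n = real (m choose ?k) * 2 ^ (m - ?k)"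
    using assms binomial_symmetric[OF assms] by simp
  also have "\<dots> = (\<Sum>j\<le>m. real (m choose j) * real (j choose ?k))"
    using sum_binomial_mult_binomial[of ?k m] by (metis (mono_tags, lifting) diff_le_self of_nat_mult of_nat_numeral of_nat_power of_nat_sum sum.cong)
  finally have thin: "binom_weight m n = (\<Sum>j\<le>m. binom_weight m j * (real (j choose ?k) / 2 ^ j))"
    unfolding binom_weight_def by (simp add: sum_divide_distrib)
  have "(binom_weight m n)\<^sup>2
      \<le> (\<Sum>j\<le>m. binom_weight m j) * (\<Sum>j\<le>m. binom_weight m j * (real (j choose ?k) / 2 ^ j)\<^sup>2)"
    unfolding thin by (rule weighted_Cauchy_Schwarz) (rule binom_weight_nonneg)
  also have "\<dots> \<le> 1 * (\<Sum>j\<le>m. binom_weight m j * (2 / (real j + 1)))"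
    unfolding sum_binom_weight
    by (intro mult_left_mono sum_mono binomial_div_pow2_sq_le binom_weight_nonneg) auto
  also have "\<dots> = 2 * (\<Sum>j\<le>m. binom_weight m j / (real j + 1))"
    by (simp add: sum_distrib_left mult.commute)
  also have "\<dots> \<le> 2 * (3 / (2 * (real m + 1)))"
    by (intro mult_left_mono sum_binom_weight_div_Suc_le) auto
  also have "\<dots> = 3 / (real m + 1)"
    by (simp add: field_simps)
  finally show ?thesis .
qed

lemma trinomial_eq_binomial:
  assumes "a \<le> n" "n \<le> m"
  shows "trinomial m (int a, int (n - a), int (m - n)) = real (m choose n) * real (n choose a) / 3 ^ m"
proof -
  have "trinomial m (int a, int (n - a), int (m - n)) = fact m / (fact a * fact (n - a) * fact (m - n) * 3 ^ m)"
    using assms by (simp add: trinomial_def nat_diff_distrib)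
  also have "\<dots> = fact m / (fact n * fact (m - n)) * (fact n / (fact a * fact (n - a))) / 3 ^ m"
    by (simp add: field_simps)
  finally show ?thesis
    by (simp only: binomial_fact[OF assms(1), where 'a = real] binomial_fact[OF assms(2), where 'a = real])
qed

lemma sum_trinomial_sq_level:
  assumes "n \<le> m"
  shows "(\<Sum>a\<le>n. (trinomial m (int a, int (n - a), int (m - n)))\<^sup>2) = (binom_weight m n)\<^sup>2 * central_binom n"
proof -
  have sq: "(C * D / 3 ^ m)\<^sup>2 = (C / 3 ^ m)\<^sup>2 * D\<^sup>2" for C D :: real
    by (simp add: power2_eq_square)
  have "(\<Sum>a\<le>n. (trinomial m (int a, int (n - a), int (m - n)))\<^sup>2)
      = (\<Sum>a\<le>n. (real (m choose n) / 3 ^ m)\<^sup>2 * (real (n choose a))\<^sup>2)"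
    by (intro sum.cong refl) (simp only: trinomial_eq_binomial[OF _ assms] sq atMost_iff)
  also have "\<dots> = (real (m choose n) / 3 ^ m)\<^sup>2 * real ((2 * n) choose n)"
    by (simp add: sum_distrib_left flip: choose_square_sum)
  also have "\<dots> = (binom_weight m n)\<^sup>2 * central_binom n"
  proof -
    have "(4::real) ^ n = (2 ^ n)\<^sup>2"
      by (simp add: power2_eq_square flip: power_mult_distrib)
    then show ?thesis
      unfolding binom_weight_def central_binom_def by (simp add: power_divide power_mult_distrib)
  qed
  finally show ?thesis .
qed

text \<open>Grouping the lattice points by \<open>n = a + b\<close>.\<close>
lemma meet_prob_0_eq_sum: "meet_prob m 0 = (\<Sum>n\<le>m. (binom_weight m n)\<^sup>2 * central_binom n)"
proof -
  let ?f = "\<lambda>(n, a). (int a, int (n - a), int (m - n))"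
  let ?S = "SIGMA n:{..m}. {..n}"
  have "meet_prob m 0 = Sum_any (\<lambda>y. (trinomial m y)\<^sup>2)"
    unfolding meet_prob_def walk_expect_eq_Sum_any by (simp add: power2_eq_square)
  also have "\<dots> = (\<Sum>y\<in>?f ` ?S. (trinomial m y)\<^sup>2)"
  proof (rule Sum_any_eq_sum)
    fix y assume "(trinomial m y)\<^sup>2 \<noteq> 0"
    moreover obtain a b c where y: "y = (a, b, c)" by (cases y)
    ultimately have "0 \<le> a" "0 \<le> b" "0 \<le> c" "a + b + c = int m"
      by (auto simp: trinomial_def split: if_splits)
    then have "(nat (a + b), nat a) \<in> ?S" "y = ?f (nat (a + b), nat a)"
      using y by auto
    then show "y \<in> ?f ` ?S" by (rule rev_image_eqI)
  qed simp
  also have "\<dots> = (\<Sum>x\<in>?S. (trinomial m (?f x))\<^sup>2)"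
    by (rule sum.reindex[unfolded comp_def]) (auto simp: inj_on_def)
  also have "\<dots> = (\<Sum>(n, a)\<in>?S. (trinomial m (int a, int (n - a), int (m - n)))\<^sup>2)"
    by (rule sum.cong) auto
  also have "\<dots> = (\<Sum>n\<le>m. \<Sum>a\<le>n. (trinomial m (int a, int (n - a), int (m - n)))\<^sup>2)"
    by (rule sum.Sigma[symmetric]) auto
  also have "\<dots> = (\<Sum>n\<le>m. (binom_weight m n)\<^sup>2 * central_binom n)"
    by (rule sum.cong[OF refl]) (rule sum_trinomial_sq_level, simp)
  finally show ?thesis .
qed

lemma meet_prob_0_upper: "meet_prob m 0 \<le> 9 / (4 * (real m + 1))"
proof -
  let ?s = "sqrt (3 / (real m + 1))"
  let ?T = "\<Sum>n\<le>m. binom_weight m n * central_binom n"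
  have "meet_prob m 0 \<le> (\<Sum>n\<le>m. ?s * (binom_weight m n * central_binom n))"
    unfolding meet_prob_0_eq_sum
  proof (rule sum_mono)
    fix n assume "n \<in> {..m}"
    then have "binom_weight m n \<le> ?s"
      using binom_weight_sq_le[of n m] binom_weight_nonneg[of m n] by (simp add: real_le_rsqrt)
    then show "(binom_weight m n)\<^sup>2 * central_binom n \<le> ?s * (binom_weight m n * central_binom n)"
      using binom_weight_nonneg[of m n] central_binom_nonneg[of n]
      by (simp add: power2_eq_square mult_right_mono mult.assoc[symmetric])
  qed
  also have "\<dots> = ?s * ?T" by (simp add: sum_distrib_left)
  finally have upper: "meet_prob m 0 \<le> ?s * ?T" .
  have "?T\<^sup>2 \<le> (\<Sum>n\<le>m. binom_weight m n) * (\<Sum>n\<le>m. binom_weight m n * (central_binom n)\<^sup>2)"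
    by (rule weighted_Cauchy_Schwarz) (rule binom_weight_nonneg)
  also have "\<dots> \<le> 1 * (\<Sum>n\<le>m. binom_weight m n * (1 / (real n + 1)))"
    unfolding sum_binom_weight
    by (intro mult_left_mono sum_mono binom_weight_nonneg central_binom_sq_le_div) auto
  also have "\<dots> \<le> 3 / (2 * (real m + 1))"
    using sum_binom_weight_div_Suc_le by simp
  finally have T: "?T\<^sup>2 \<le> 3 / (2 * (real m + 1))" .
  have "(meet_prob m 0)\<^sup>2 \<le> (?s * ?T)\<^sup>2"
    using upper meet_prob_nonneg by (intro power_mono) auto
  also have "\<dots> = (3 / (real m + 1)) * ?T\<^sup>2" by (simp add: power_mult_distrib)
  also have "\<dots> \<le> (3 / (real m + 1)) * (3 / (2 * (real m + 1)))"
    by (intro mult_left_mono T) auto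
  also have "\<dots> \<le> (9 / (4 * (real m + 1)))\<^sup>2"
  proof -
    have "(3 / y) * (3 / (2 * y)) \<le> (9 / (4 * y))\<^sup>2" if "0 < y" for y :: real
      using that by (simp add: power2_eq_square field_simps)
    from this[of "real m + 1"] show ?thesis by simp
  qed
  finally show ?thesis by (rule power2_le_imp_le) simp
qed

section \<open>The broadcast values as linear combinations of the noise\<close>

text \<open>The coefficient of the noise variable \<open>k\<close> (\<open>None\<close> for \<open>X\<^sub>0\<close>, \<open>Some e\<close> for \<open>W\<^sub>e\<close>) in the
  broadcast value at a point of rank \<open>n\<close>.\<close>
fun noise_coef :: "nat \<Rightarrow> point \<Rightarrow> (point \<times> point) option \<Rightarrow> real" where
  "noise_coef 0 v k = (if k = None then 1 else 0)"
| "noise_coef (Suc n) v k = (1/3) * (\<Sum>i<3. noise_coef n (v - unit_vec i) k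
     + (if k = Some (v - unit_vec i, v) then 1 else 0))"

definition noise_supp :: "nat \<Rightarrow> point \<Rightarrow> (point \<times> point) option set" where
  "noise_supp n v = {k. noise_coef n v k \<noteq> 0}"

lemma noise_coef_nonneg: "0 \<le> noise_coef n v k"
  by (induction n arbitrary: v) (simp_all add: sum_nonneg add_nonneg_nonneg)

lemma noise_supp_0: "noise_supp 0 v = {None}"
  unfolding noise_supp_def by (rule set_eqI) simp

lemma noise_supp_Suc:
  "noise_supp (Suc n) v = (\<Union>i<3. noise_supp n (v - unit_vec i)) \<union> (\<lambda>i. Some (v - unit_vec i, v)) ` {..<3}"
proof -
  let ?t = "\<lambda>k i. noise_coef n (v - unit_vec i) k + (if k = Some (v - unit_vec i, v) then 1 else 0)"
  have "noise_coef (Suc n) v k \<noteq> 0 \<longleftrightarrow> (\<exists>i<3. noise_coef n (v - unit_vec i) k \<noteq> 0 \<or> k = Some (v - unit_vec i, v))"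
    for k
  proof -
    have "\<And>i. 0 \<le> ?t k i" by (simp add: noise_coef_nonneg add_nonneg_nonneg)
    then have "noise_coef (Suc n) v k \<noteq> 0 \<longleftrightarrow> (\<exists>i<3. ?t k i \<noteq> 0)"
      using sum_nonneg_eq_0_iff[of "{..<3::nat}" "?t k"] by auto
    also have "\<dots> \<longleftrightarrow> (\<exists>i<3. noise_coef n (v - unit_vec i) k \<noteq> 0 \<or> k = Some (v - unit_vec i, v))"
      using noise_coef_nonneg[of n _ k] by (auto simp: add_nonneg_eq_0_iff)
    finally show ?thesis .
  qed
  then show ?thesis unfolding noise_supp_def by auto
qed

lemma finite_noise_supp [simp]: "finite (noise_supp n v)"
  by (induction n arbitrary: v) (auto simp: noise_supp_Suc noise_supp_0)

lemma noise_coef_rank_le: "noise_coef n u (Some (x, y)) \<noteq> 0 \<Longrightarrow> rank y \<le> rank u"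
proof (induction n arbitrary: u)
  case (Suc n)
  then have "Some (x, y) \<in> noise_supp (Suc n) u" by (simp add: noise_supp_def)
  then obtain i where i: "i < 3"
    and dj: "Some (x, y) \<in> noise_supp n (u - unit_vec i) \<or> Some (x, y) = Some (u - unit_vec i, u)"
    unfolding noise_supp_Suc by auto
  from dj show ?case
  proof
    assume "Some (x, y) \<in> noise_supp n (u - unit_vec i)"
    then have "rank y \<le> rank (u - unit_vec i)" using Suc.IH by (simp add: noise_supp_def)
    then show ?thesis using rank_minus_unit_vec[OF i] by simp
  qed simp
qed simp

lemma noise_coef_in_cover_edges:
  "noise_coef n u (Some e) \<noteq> 0 \<Longrightarrow> rank u = int n \<Longrightarrow> e \<in> cover_edges"
proof (induction n arbitrary: u)
  case (Suc n)
  then have "Some e \<in> noise_supp (Suc n) u" by (simp add: noise_supp_def)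
  then obtain i where i: "i < 3"
    and dj: "Some e \<in> noise_supp n (u - unit_vec i) \<or> Some e = Some (u - unit_vec i, u)"
    unfolding noise_supp_Suc by auto
  from dj show ?case
  proof
    assume "Some e \<in> noise_supp n (u - unit_vec i)"
    moreover have "rank (u - unit_vec i) = int n" using rank_minus_unit_vec[OF i] Suc.prems by simp
    ultimately show ?thesis using Suc.IH by (simp add: noise_supp_def)
  next
    assume "Some e = Some (u - unit_vec i, u)"
    then show ?thesis using Suc.prems i unfolding cover_edges_def HS3_def
      by (auto simp: pred_pt_eq_minus_unit_vec)
  qed
qed simp

lemma sum_mult_indicator: "finite F \<Longrightarrow> (\<Sum>k\<in>F. f k * (if k = x then 1 else 0)) = (if x \<in> F then f x else (0::real))"
  by (simp add: if_distrib[of "\<lambda>c. f _ * c"] sum.delta cong: if_cong)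

lemma bx_eq_sum_noise_coef:
  assumes "finite F" "noise_supp n v \<subseteq> F"
  shows "bx (1/3) (X0 \<omega>) (\<lambda>e. W e \<omega>) n v = (\<Sum>k\<in>F. noise_coef n v k * noise_family X0 W k \<omega>)"
  using assms(2)
proof (induction n arbitrary: v)
  case 0
  then have "None \<in> F" by (simp add: noise_supp_0)
  then show ?case
    using sum_mult_indicator[OF assms(1), of "\<lambda>k. noise_family X0 W k \<omega>" None]
    by (simp add: noise_family_def mult.commute)
next
  case (Suc n)
  let ?N = "\<lambda>k. noise_family X0 W k \<omega>"
  have "(\<Sum>k\<in>F. noise_coef (Suc n) v k * ?N k)
      = (1/3) * (\<Sum>i<3. (\<Sum>k\<in>F. noise_coef n (v - unit_vec i) k * ?N k)
                       + (\<Sum>k\<in>F. ?N k * (if k = Some (v - unit_vec i, v) then 1 else 0)))"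
    by (simp add: sum_distrib_left sum_distrib_right sum.distrib algebra_simps sum.swap[of _ F])
  also have "\<dots> = (1/3) * (\<Sum>i<3. bx (1/3) (X0 \<omega>) (\<lambda>e. W e \<omega>) n (v - unit_vec i) + W (v - unit_vec i, v) \<omega>)"
  proof (intro arg_cong[where f = "(*) (1/3)"] sum.cong refl)
    fix i assume "i \<in> {..<3::nat}"
    then have "noise_supp n (v - unit_vec i) \<subseteq> F" "Some (v - unit_vec i, v) \<in> F"
      using Suc.prems unfolding noise_supp_Suc by auto
    then show "(\<Sum>k\<in>F. noise_coef n (v - unit_vec i) k * ?N k)
        + (\<Sum>k\<in>F. ?N k * (if k = Some (v - unit_vec i, v) then 1 else 0))
      = bx (1/3) (X0 \<omega>) (\<lambda>e. W e \<omega>) n (v - unit_vec i) + W (v - unit_vec i, v) \<omega>"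
      using Suc.IH by (simp add: sum_mult_indicator[OF assms(1)] noise_family_def)
  qed
  finally show ?case by (simp add: pred_pt_eq_minus_unit_vec)
qed

text \<open>The contribution of a pair of predecessors: the products of a coefficient with an edge
  indicator vanish, because an edge into a point of rank \<open>r\<close> never feeds a point of rank \<open>r - 1\<close>.\<close>
lemma sum_noise_coef_mult_step:
  assumes "rank v = rank v'" "finite F" "noise_supp (Suc n) v \<subseteq> F" "i < 3" "j < 3"
    and IH: "(\<Sum>k\<in>F. noise_coef n (v - unit_vec i) k * noise_coef n (v' - unit_vec j) k)
      = cov_kernel n ((v - v') - unit_vec i + unit_vec j)"
  shows "(\<Sum>k\<in>F. (noise_coef n (v - unit_vec i) k + (if k = Some (v - unit_vec i, v) then 1 else 0))
                 * (noise_coef n (v' - unit_vec j) k + (if k = Some (v' - unit_vec j, v') then 1 else 0)))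
       = cov_kernel n ((v - v') - unit_vec i + unit_vec j) + (if v = v' \<and> i = j then 1 else 0)"
proof -
  let ?A = "noise_coef n (v - unit_vec i)" and ?A' = "noise_coef n (v' - unit_vec j)"
  let ?x = "Some (v - unit_vec i, v)" and ?x' = "Some (v' - unit_vec j, v')"
  let ?B = "\<lambda>k. if k = ?x then 1 else 0 :: real" and ?B' = "\<lambda>k. if k = ?x' then 1 else 0 :: real"
  have x: "?x \<in> F" using assms(3,4) unfolding noise_supp_Suc by auto
  have "?A ?x' = 0"
  proof (rule ccontr)
    assume "?A ?x' \<noteq> 0"
    then have "rank v' \<le> rank (v - unit_vec i)" by (rule noise_coef_rank_le)
    then show False using rank_minus_unit_vec[OF assms(4)] assms(1) by simp
  qed
  then have AB': "(\<Sum>k\<in>F. ?A k * ?B' k) = 0"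
    by (simp add: sum_mult_indicator[OF assms(2)])
  have "?A' ?x = 0"
  proof (rule ccontr)
    assume "?A' ?x \<noteq> 0"
    then have "rank v \<le> rank (v' - unit_vec j)" by (rule noise_coef_rank_le)
    then show False using rank_minus_unit_vec[OF assms(5)] assms(1) by simp
  qed
  then have BA': "(\<Sum>k\<in>F. ?B k * ?A' k) = 0"
    using sum_mult_indicator[OF assms(2), of ?A' ?x] by (simp add: mult.commute)
  have "?x = ?x' \<longleftrightarrow> v = v' \<and> i = j"
    using unit_vec_inj[OF assms(4,5)] by auto
  then have BB': "(\<Sum>k\<in>F. ?B k * ?B' k) = (if v = v' \<and> i = j then 1 else 0)"
    using sum_mult_indicator[OF assms(2), of ?B ?x'] x by auto
  have "(\<Sum>k\<in>F. (?A k + ?B k) * (?A' k + ?B' k))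
      = (\<Sum>k\<in>F. ?A k * ?A' k) + (\<Sum>k\<in>F. ?A k * ?B' k) + (\<Sum>k\<in>F. ?B k * ?A' k) + (\<Sum>k\<in>F. ?B k * ?B' k)"
    by (simp add: distrib_left distrib_right sum.distrib add.assoc)
  then show ?thesis using IH AB' BA' BB' by simp
qed

lemma sum_noise_coef_mult:
  assumes "rank v = rank v'" "finite F" "noise_supp n v \<subseteq> F"
  shows "(\<Sum>k\<in>F. noise_coef n v k * noise_coef n v' k) = cov_kernel n (v - v')"
  using assms
proof (induction n arbitrary: v v')
  case 0
  then have "None \<in> F" by (simp add: noise_supp_0)
  have "(\<Sum>k\<in>F. noise_coef 0 v k * noise_coef 0 v' k) = (\<Sum>k\<in>F. if k = None then 1 else 0)"
    by (intro sum.cong) auto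
  with \<open>None \<in> F\<close> 0 show ?case by (simp add: cov_kernel_def)
next
  case (Suc n)
  let ?t = "\<lambda>u i k. noise_coef n (u - unit_vec i) k + (if k = Some (u - unit_vec i, u) then 1 else 0)"
  have step: "(\<Sum>k\<in>F. ?t v i k * ?t v' j k)
      = cov_kernel n ((v - v') - unit_vec i + unit_vec j) + (if v = v' \<and> i = j then 1 else 0)"
    if "i < 3" "j < 3" for i j
  proof (rule sum_noise_coef_mult_step[OF Suc.prems(1,2,3) that])
    show "(\<Sum>k\<in>F. noise_coef n (v - unit_vec i) k * noise_coef n (v' - unit_vec j) k)
        = cov_kernel n ((v - v') - unit_vec i + unit_vec j)"
      using Suc.IH[of "v - unit_vec i" "v' - unit_vec j"] Suc.prems that
      by (auto simp: rank_minus_unit_vec noise_supp_Suc algebra_simps)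
  qed
  have "(\<Sum>k\<in>F. noise_coef (Suc n) v k * noise_coef (Suc n) v' k)
      = (1/9) * (\<Sum>i<3. \<Sum>j<3. \<Sum>k\<in>F. ?t v i k * ?t v' j k)"
    by (simp add: sum_product sum_distrib_left sum.swap[of _ F] mult_ac)
  also have "\<dots> = (1/9) * (\<Sum>i<3. \<Sum>j<3. cov_kernel n ((v - v') - unit_vec i + unit_vec j)
      + (if v = v' \<and> i = j then 1 else 0))"
    using step by simp
  also have "\<dots> = cov_kernel (Suc n) (v - v')"
    by (simp add: cov_kernel_Suc sum.distrib sum_lessThan_3)
  finally show ?case .
qed

section \<open>Second moments of the noise\<close>

definition noise_index :: "(point \<times> point) option set" where
  "noise_index = insert None (Some ` cover_edges)"

lemma noise_supp_subset_noise_index: "rank u = int n \<Longrightarrow> noise_supp n u \<subseteq> noise_index"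
proof
  fix k assume "rank u = int n" "k \<in> noise_supp n u"
  then show "k \<in> noise_index"
    by (cases k) (auto simp: noise_index_def noise_supp_def intro: noise_coef_in_cover_edges)
qed

lemma
  assumes "gaussian_broadcast_model M X0 W" "k \<in> noise_index"
  shows noise_integrable: "integrable M (noise_family X0 W k)"
    and noise_mean: "(\<integral>\<omega>. noise_family X0 W k \<omega> \<partial>M) = 0"
    and noise_square_integrable: "integrable M (\<lambda>\<omega>. noise_family X0 W k \<omega> * noise_family X0 W k \<omega>)"
    and noise_second_moment: "(\<integral>\<omega>. noise_family X0 W k \<omega> * noise_family X0 W k \<omega> \<partial>M) = 1"
proof -
  let ?X = "noise_family X0 W k"
  have P: "prob_space M" using assms(1) unfolding gaussian_broadcast_model_def by simp
  have D: "distributed M lborel ?X std_normal_density"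
    using assms unfolding gaussian_broadcast_model_def noise_index_def noise_family_def by auto
  have nn: "\<And>x. 0 \<le> std_normal_density x" by (simp add: normal_density_nonneg)
  show "integrable M ?X"
    using distributed_integrable[OF D, of "\<lambda>x. x"] integrable_std_normal_moment[of 1] nn by simp
  show mean: "(\<integral>\<omega>. ?X \<omega> \<partial>M) = 0"
    using prob_space.standard_normal_distributed_expectation[OF P D] by simp
  show "integrable M (\<lambda>\<omega>. ?X \<omega> * ?X \<omega>)"
    using distributed_integrable[OF D, of "\<lambda>x. x^2"] integrable_std_normal_moment[of 2] nn
    by (simp add: power2_eq_square)
  show "(\<integral>\<omega>. ?X \<omega> * ?X \<omega> \<partial>M) = 1"
    using prob_space.standard_normal_distributed_variance[OF P D] mean by (simp add: power2_eq_square)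
qed

lemma
  assumes "gaussian_broadcast_model M X0 W" "k \<in> noise_index" "l \<in> noise_index"
  shows noise_product_integrable: "integrable M (\<lambda>\<omega>. noise_family X0 W k \<omega> * noise_family X0 W l \<omega>)"
    and noise_product_moment:
      "(\<integral>\<omega>. noise_family X0 W k \<omega> * noise_family X0 W l \<omega> \<partial>M) = (if k = l then 1 else 0)"
proof -
  let ?N = "noise_family X0 W"
  have P: "prob_space M" using assms(1) unfolding gaussian_broadcast_model_def by simp
  have indep: "prob_space.indep_var M borel (?N k) borel (?N l)" if "k \<noteq> l"
  proof -
    have "prob_space.indep_vars M (\<lambda>_. borel) ?N noise_index"
      using assms(1) unfolding gaussian_broadcast_model_def noise_index_def by simp
    then have kl: "prob_space.indep_vars M (\<lambda>_. borel) ?N (insert k {l})"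
      by (rule prob_space.indep_vars_subset[OF P]) (use assms in auto)
    have "prob_space.indep_var M borel (?N k) borel (\<lambda>\<omega>. \<Sum>i\<in>{l}. ?N i \<omega>)"
      by (rule prob_space.indep_vars_sum[OF P _ _ kl]) (use that in auto)
    then show ?thesis by simp
  qed
  show "integrable M (\<lambda>\<omega>. ?N k \<omega> * ?N l \<omega>)"
    using prob_space.indep_var_integrable[OF P indep noise_integrable[OF assms(1,2)] noise_integrable[OF assms(1,3)]]
      noise_square_integrable[OF assms(1,2)]
    by (cases "k = l") auto
  show "(\<integral>\<omega>. ?N k \<omega> * ?N l \<omega> \<partial>M) = (if k = l then 1 else 0)"
    using prob_space.indep_var_lebesgue_integral[OF P indep noise_integrable[OF assms(1,2)] noise_integrable[OF assms(1,3)]]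
      noise_mean[OF assms(1,2)] noise_second_moment[OF assms(1,2)]
    by (cases "k = l") auto
qed

lemma covariance_noise_combination:
  assumes "gaussian_broadcast_model M X0 W" "finite F" "F \<subseteq> noise_index"
  shows "covariance M (\<lambda>\<omega>. \<Sum>k\<in>F. a k * noise_family X0 W k \<omega>) (\<lambda>\<omega>. \<Sum>k\<in>F. b k * noise_family X0 W k \<omega>)
    = (\<Sum>k\<in>F. a k * b k)"
proof -
  let ?N = "noise_family X0 W"
  have idx: "k \<in> F \<Longrightarrow> k \<in> noise_index" for k using assms(3) by auto
  have mean: "(\<integral>\<omega>. (\<Sum>k\<in>F. c k * ?N k \<omega>) \<partial>M) = 0" for c
    using noise_integrable[OF assms(1) idx] noise_mean[OF assms(1) idx]
    by (simp add: Bochner_Integration.integral_sum)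
  have "(\<integral>\<omega>. (\<Sum>k\<in>F. a k * ?N k \<omega>) * (\<Sum>k\<in>F. b k * ?N k \<omega>) \<partial>M)
      = (\<integral>\<omega>. (\<Sum>k\<in>F. \<Sum>l\<in>F. (a k * b l) * (?N k \<omega> * ?N l \<omega>)) \<partial>M)"
    by (simp add: sum_product mult_ac)
  also have "\<dots> = (\<Sum>k\<in>F. \<Sum>l\<in>F. (a k * b l) * (if k = l then 1 else 0))"
    using noise_product_integrable[OF assms(1) idx idx] noise_product_moment[OF assms(1) idx idx]
    by (simp add: Bochner_Integration.integral_sum integrable_sum)
  also have "\<dots> = (\<Sum>k\<in>F. a k * b k)"
    using assms(2) by (simp add: if_distrib[of "\<lambda>x. _ * x"] sum.delta cong: if_cong)
  finally show ?thesis unfolding covariance_def mean by simp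
qed

lemma variance_of_eq_covariance: "variance_of M X = covariance M X X"
  by (simp add: variance_of_def covariance_def power2_eq_square)

lemma covariance_broadcastX:
  assumes "gaussian_broadcast_model M X0 W" "rank v = int n" "rank v' = int n"
  shows "covariance M (broadcastX (1/3) X0 W v) (broadcastX (1/3) X0 W v') = cov_kernel n (v - v')"
proof -
  define F where "F = noise_supp n v \<union> noise_supp n v'"
  have F: "finite F" "F \<subseteq> noise_index"
    using noise_supp_subset_noise_index assms(2,3) by (auto simp: F_def)
  have expand: "broadcastX (1/3) X0 W u = (\<lambda>\<omega>. \<Sum>k\<in>F. noise_coef n u k * noise_family X0 W k \<omega>)"
    if "u \<in> {v, v'}" for u
  proof
    fix \<omega>
    have "broadcastX (1/3) X0 W u \<omega> = bx (1/3) (X0 \<omega>) (\<lambda>e. W e \<omega>) n u"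
      using that assms(2,3) by (auto simp: broadcastX_def)
    also have "\<dots> = (\<Sum>k\<in>F. noise_coef n u k * noise_family X0 W k \<omega>)"
      by (rule bx_eq_sum_noise_coef[OF F(1)]) (use that in \<open>auto simp: F_def\<close>)
    finally show "broadcastX (1/3) X0 W u \<omega> = (\<Sum>k\<in>F. noise_coef n u k * noise_family X0 W k \<omega>)" .
  qed
  have "(\<Sum>k\<in>F. noise_coef n v k * noise_coef n v' k) = cov_kernel n (v - v')"
    by (rule sum_noise_coef_mult[OF _ F(1)]) (use assms(2,3) in \<open>auto simp: F_def\<close>)
  then show ?thesis
    using covariance_noise_combination[OF assms(1) F] by (simp add: expand)
qed

lemma sum_inverse_Suc_le_ln: "(\<Sum>j<n. 1 / (real j + 1)) \<le> 1 + ln (real n)"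
proof (cases "n = 0")
  case False
  then have "harm n - ln (real n) \<le> harm 1 - ln (real 1)"
    by (intro euler_mascheroni_sequence_decreasing) auto
  then show ?thesis by (simp add: harm_altdef inverse_eq_divide add.commute)
qed simp

lemma ln_le_sum_inverse:
  assumes "1 \<le> a" "a \<le> b"
  shows "ln (real b) - ln (real a) \<le> (\<Sum>j\<in>{a..<b}. 1 / real j)"
  using assms(2)
proof (induction rule: dec_induct)
  case (step n)
  have "ln (real n + 1) - ln (real n) < 1 / real n"
    using assms step by (intro ln_diff_le_inverse) simp
  then show ?case using step by (simp add: add.commute)
qed simp

section \<open>Bounds for the covariance kernel\<close>

lemma cov_kernel_le_cov_kernel_0: "cov_kernel n d \<le> cov_kernel n 0"
  unfolding cov_kernel_def by (simp add: sum_mono meet_prob_le_meet_prob_0)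

lemma cov_kernel_0_le_ln:
  assumes "2 ^ 24 \<le> real n"
  shows "cov_kernel n 0 \<le> ln (real n)"
proof -
  have "(\<Sum>j<n. meet_prob j 0) \<le> (\<Sum>j<n. 9 / 4 * (1 / (real j + 1)))"
    by (rule sum_mono) (use meet_prob_0_upper in simp)
  also have "\<dots> = 9 / 4 * (\<Sum>j<n. 1 / (real j + 1))"
    by (simp only: sum_distrib_left)
  also have "\<dots> \<le> 9 / 4 * (1 + ln (real n))"
    by (intro mult_left_mono sum_inverse_Suc_le_ln) auto
  finally have "cov_kernel n 0 \<le> 1 + 1 / 3 * (9 / 4 * (1 + ln (real n)))"
    by (simp add: cov_kernel_def)
  moreover have "ln ((2::real) ^ 24) \<le> ln (real n)"
    using assms by (subst ln_le_cancel_iff) auto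
  then have "24 * ln (2::real) \<le> ln (real n)"
    by (simp only: ln_realpow)
  then have "12 \<le> ln (real n)"
    using ln2_ge_two_thirds by linarith
  moreover have "1 + 1 / 3 * (9 / 4 * (1 + L)) \<le> L" if "12 \<le> L" for L :: real
    using that by (simp add: field_simps)
  ultimately show ?thesis by (meson order.trans)
qed

text \<open>Telescoping the bound of \<open>meet_prob_gap_le\<close>.\<close>
lemma sum_meet_prob_ge:
  assumes "m0 \<le> n"
  shows "(\<Sum>j\<in>{m0..<n}. meet_prob j 0) - 9 * (real_of_int x ^ 2 + real_of_int y ^ 2) * meet_prob m0 0
    \<le> (\<Sum>j\<in>{m0..<n}. meet_prob j (x, y, - x - y))"
proof -
  let ?K = "9 * (real_of_int x ^ 2 + real_of_int y ^ 2)"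
  have tel: "(\<Sum>j\<in>{m0..<n}. meet_prob j 0 - meet_prob (Suc j) 0) = meet_prob m0 0 - meet_prob n 0"
    using sum_Suc_diff'[OF assms, of "\<lambda>j. - meet_prob j 0"] by simp
  have "(\<Sum>j\<in>{m0..<n}. meet_prob j 0) - ?K * (meet_prob m0 0 - meet_prob n 0)
      = (\<Sum>j\<in>{m0..<n}. meet_prob j 0 - ?K * (meet_prob j 0 - meet_prob (Suc j) 0))"
    by (simp only: sum_subtractf[of "\<lambda>j. meet_prob j 0" "\<lambda>j. ?K * (meet_prob j 0 - meet_prob (Suc j) 0)"]
        sum_distrib_left[symmetric] tel)
  also have "\<dots> \<le> (\<Sum>j\<in>{m0..<n}. meet_prob j (x, y, - x - y))"
    by (rule sum_mono) (use meet_prob_gap_le[of _ x y] in \<open>simp add: algebra_simps\<close>)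
  finally have "(\<Sum>j\<in>{m0..<n}. meet_prob j 0) - ?K * (meet_prob m0 0 - meet_prob n 0)
      \<le> (\<Sum>j\<in>{m0..<n}. meet_prob j (x, y, - x - y))" .
  moreover have "?K * (meet_prob m0 0 - meet_prob n 0) \<le> ?K * meet_prob m0 0"
    using meet_prob_nonneg[of n 0] by (intro mult_left_mono) auto
  ultimately show ?thesis by linarith
qed

lemma sum_meet_prob_0_ge_ln:
  assumes "1 \<le> a" "a \<le> b"
  shows "(ln (real b) - ln (real a)) / 36 \<le> (\<Sum>j\<in>{a..<b}. meet_prob j 0)"
proof -
  have "(ln (real b) - ln (real a)) / 36 \<le> 1 / 36 * (\<Sum>j\<in>{a..<b}. 1 / real j)"
    using ln_le_sum_inverse[OF assms] by simp
  also have "\<dots> = (\<Sum>j\<in>{a..<b}. 1 / 36 * (1 / real j))"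
    by (simp only: sum_distrib_left)
  also have "\<dots> \<le> (\<Sum>j\<in>{a..<b}. meet_prob j 0)"
  proof (rule sum_mono)
    fix j assume "j \<in> {a..<b}"
    then show "1 / 36 * (1 / real j) \<le> meet_prob j 0"
      using assms(1) meet_prob_0_lower[of j] by simp
  qed
  finally show ?thesis .
qed

lemma meet_prob_gap_weight_le:
  fixes Mi x y :: int
  assumes M1: "1 \<le> Mi" and hx: "\<bar>x\<bar> \<le> 2 * Mi" and hy: "\<bar>y\<bar> \<le> 2 * Mi"
  shows "9 * (real_of_int x ^ 2 + real_of_int y ^ 2) * meet_prob (nat (128 * Mi ^ 2)) 0 \<le> 2"
proof -
  let ?M = "real_of_int Mi" and ?m0 = "nat (128 * Mi ^ 2)"
  have sq: "real_of_int z ^ 2 \<le> 4 * ?M ^ 2" if "\<bar>z\<bar> \<le> 2 * Mi" for z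
  proof -
    have "\<bar>real_of_int z\<bar> ^ 2 \<le> (2 * ?M) ^ 2"
      using that by (intro power_mono) linarith+
    then show ?thesis by (simp add: power_mult_distrib)
  qed
  have "9 * (real_of_int x ^ 2 + real_of_int y ^ 2) * meet_prob ?m0 0 \<le> (72 * ?M ^ 2) * meet_prob ?m0 0"
    using sq[OF hx] sq[OF hy] meet_prob_nonneg[of ?m0 0] by (intro mult_right_mono) auto
  also have "\<dots> \<le> (72 * ?M ^ 2) * (9 / (4 * (real ?m0 + 1)))"
    by (intro mult_left_mono meet_prob_0_upper) auto
  also have "\<dots> \<le> 2"
  proof -
    have "(72 * z) * (9 / (4 * (128 * z + 1))) \<le> 2" if "0 < z" for z :: real
      using that by (simp add: field_simps)
    moreover have "real ?m0 = 128 * ?M ^ 2" using M1 by (simp add: of_nat_nat)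
    ultimately show ?thesis using M1 by simp
  qed
  finally show ?thesis .
qed

text \<open>The walks are compared from time \<open>m\<^sub>0 = 128 M\<^sup>2\<close> on, where the gap bound has become
  negligible; the times before \<open>m\<^sub>0\<close> cost at most a third of the logarithm because
  \<open>m\<^sub>0\<^sup>3 \<le> n\<close>.\<close>
lemma cov_kernel_lower:
  fixes Mi x y :: int
  assumes M1: "1 \<le> Mi" and hx: "\<bar>x\<bar> \<le> 2 * Mi" and hy: "\<bar>y\<bar> \<le> 2 * Mi"
    and hn: "2 ^ 24 * Mi ^ 6 \<le> int n"
  shows "ln (real n) / 400 \<le> cov_kernel n (x, y, - x - y)"
proof -
  let ?M = "real_of_int Mi" and ?d = "(x, y, - x - y) :: point"
  define m0 where "m0 = nat (128 * Mi ^ 2)"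
  have M1r: "1 \<le> ?M" using M1 by simp
  have "real_of_int (2 ^ 24 * Mi ^ 6) \<le> real_of_int (int n)"
    using hn by (simp only: of_int_le_iff)
  then have hnr: "2 ^ 24 * ?M ^ 6 \<le> real n" by simp
  have m0r: "real m0 = 128 * ?M ^ 2" unfolding m0_def using M1 by (simp add: of_nat_nat)
  have "1 \<le> ?M ^ 2" using M1r by (simp add: one_le_power)
  then have m01: "1 \<le> m0" using m0r by linarith
  have "?M ^ 2 \<le> ?M ^ 6" using M1r by (intro power_increasing) auto
  then have "128 * ?M ^ 2 \<le> 2 ^ 24 * ?M ^ 6" by (intro mult_mono) auto
  then have m0n: "m0 \<le> n" using m0r hnr by linarith
  have "(\<Sum>j\<in>{m0..<n}. meet_prob j 0) - 2 \<le> (\<Sum>j\<in>{m0..<n}. meet_prob j ?d)"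
    using sum_meet_prob_ge[OF m0n, of x y] meet_prob_gap_weight_le[OF M1 hx hy]
    unfolding m0_def by linarith
  moreover have "(\<Sum>j\<in>{m0..<n}. meet_prob j ?d) \<le> (\<Sum>j<n. meet_prob j ?d)"
    by (rule sum_mono2) (auto intro: meet_prob_nonneg)
  moreover have "3 * ln (real m0) \<le> ln (real n)"
  proof -
    have "real m0 ^ 3 = 2 ^ 21 * ?M ^ 6"
      unfolding m0r by (simp add: power_mult_distrib power_mult[symmetric])
    also have "\<dots> \<le> real n" using hnr M1r by simp
    finally have "ln (real m0 ^ 3) \<le> ln (real n)"
      using m01 m0n by (subst ln_le_cancel_iff) auto
    then show ?thesis by (simp add: ln_realpow)
  qed
  then have "(ln (real n) - ln (real n) / 3) / 36 \<le> (ln (real n) - ln (real m0)) / 36"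
    by (intro divide_right_mono) auto
  ultimately have "(ln (real n) - ln (real n) / 3) / 36 - 2 \<le> (\<Sum>j<n. meet_prob j ?d)"
    using sum_meet_prob_0_ge_ln[OF m01 m0n] by linarith
  moreover have "0 \<le> ln (real n)" using m01 m0n by simp
  moreover have "L / 400 \<le> 1 + 1 / 3 * S" if "(L - L / 3) / 36 - 2 \<le> S" "0 \<le> L" for L S :: real
    using that by (simp add: field_simps)
  ultimately show ?thesis unfolding cov_kernel_def by blast
qed

theorem lemmal:
  fixes M :: "'w measure" and X0 :: "'w \<Rightarrow> real" and W :: "point \<times> point \<Rightarrow> 'w \<Rightarrow> real"
    and Mi t i j i' j' :: int
  assumes model: "gaussian_broadcast_model M X0 W"
    and hM: "Mi \<ge> 2 ^ 5"
    and ht: "t \<ge> 2 ^ 24 * Mi ^ 6"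
    and hclose: "max \<bar>i - i'\<bar> \<bar>j - j'\<bar> \<le> 2 * Mi"
  shows "ln (real_of_int t) \<ge> variance_of M (broadcastX (1/3) X0 W (i, j, t - i - j))
     \<and> variance_of M (broadcastX (1/3) X0 W (i, j, t - i - j))
       \<ge> covariance M (broadcastX (1/3) X0 W (i, j, t - i - j))
                      (broadcastX (1/3) X0 W (i', j', t - i' - j'))
     \<and> covariance M (broadcastX (1/3) X0 W (i, j, t - i - j))
                    (broadcastX (1/3) X0 W (i', j', t - i' - j'))
       \<ge> ln (real_of_int t) / 400"
proof -
  let ?X = "broadcastX (1/3) X0 W"
  let ?v = "(i, j, t - i - j) :: point" and ?v' = "(i', j', t - i' - j') :: point"
  have M1: "1 \<le> Mi" using hM by simp
  have "(2::int) ^ 24 * 1 \<le> 2 ^ 24 * Mi ^ 6"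
    using M1 by (intro mult_left_mono) (auto simp: one_le_power)
  then have "2 ^ 24 \<le> t" using ht by linarith
  then obtain n where tn: "t = int n" and n24: "(2::real) ^ 24 \<le> real n"
    by (metis nonneg_int_cases of_int_le_iff of_int_numeral of_int_of_nat_eq of_int_power
        zero_le_numeral zero_le_power order_trans)
  have rank: "rank ?v = int n" "rank ?v' = int n"
    using tn by (simp_all add: rank_def)
  have diff: "?v - ?v' = (i - i', j - j', - (i - i') - (j - j'))"
    by simp
  have var: "variance_of M (?X ?v) = cov_kernel n 0"
    using covariance_broadcastX[OF model rank(1) rank(1)] by (simp add: variance_of_eq_covariance)
  have cov: "covariance M (?X ?v) (?X ?v') = cov_kernel n (i - i', j - j', - (i - i') - (j - j'))"
    using covariance_broadcastX[OF model rank] unfolding diff .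
  have ln_t: "ln (real_of_int t) = ln (real n)" using tn by simp
  have "variance_of M (?X ?v) \<le> ln (real_of_int t)"
    unfolding var ln_t using n24 by (rule cov_kernel_0_le_ln)
  moreover have "covariance M (?X ?v) (?X ?v') \<le> variance_of M (?X ?v)"
    unfolding var cov by (rule cov_kernel_le_cov_kernel_0)
  moreover have "ln (real_of_int t) / 400 \<le> covariance M (?X ?v) (?X ?v')"
    unfolding cov ln_t by (rule cov_kernel_lower[OF M1]) (use hclose ht tn in auto)
  ultimately show ?thesis by simp
qed

end
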